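(* For every $M>0$, no deterministic algorithm can achieve a competitive ratio better than $\frac{1}{M}$ for online Submodular Welfare in the adversarial setting with general (not necessarily monotone) non-negative submodular utilities.
   Context: A set function $f:2^{\mathcal N}\to\mathbb R_{\ge 0}$ is submodular if $f(A\cup B)+f(A\cap B)\le f(A)+f(B)$ for all $A,B\subseteq\mathcal N$. Online Submodular Welfare: there are $n$ bidders, bidder $j$ having a non-negative submodular (not necessarily monotone) utility $f_j$ over a set $\mathcal N$ of items that arrive one by one. When an item arrives, the algorithm must immediately and irrevocably assign it to one bidder or discard it; the goal is to maximize $\sum_j f_j(S_j)$, where $S_j$ is the set of items assigned to bidder $j$ (pairwise disjoint). Utilities are accessed via value oracles, and upon an item's arrival the algorithm may only query sets of items that already arrived. In the adversarial setting an adversary chooses the arrival order (and, since only queries on arrived items are possible, the instance may depend on the algorithm's earlier decisions). An algorithm has competitive ratio $\alpha$ if on every instance its value is at least $\alpha$ times the optimal offline value. *)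

theory Defs
  imports Complex_Main "HOL-Library.FuncSet"
begin

(* Items are identified with their arrival index 0,1,...,m-1.
   A valuation profile f gives bidder j the utility f j :: nat set => real. *)

definition submodular_on :: "nat set \<Rightarrow> (nat set \<Rightarrow> real) \<Rightarrow> bool" where
  "submodular_on N g \<longleftrightarrow>
     (\<forall>A B. A \<subseteq> N \<longrightarrow> B \<subseteq> N \<longrightarrow> g (A \<union> B) + g (A \<inter> B) \<le> g A + g B)"

definition nonneg_on :: "nat set \<Rightarrow> (nat set \<Rightarrow> real) \<Rightarrow> bool" where
  "nonneg_on N g \<longleftrightarrow> (\<forall>A. A \<subseteq> N \<longrightarrow> 0 \<le> g A)"

definition valid_instance :: "nat \<Rightarrow> nat \<Rightarrow> (nat \<Rightarrow> nat set \<Rightarrow> real) \<Rightarrow> bool" where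
  "valid_instance n m f \<longleftrightarrow>
     (\<forall>j<n. submodular_on {..<m} (f j) \<and> nonneg_on {..<m} (f j))"

(* An assignment maps each item to Some bidder or None (discarded). *)
definition welfare :: "nat \<Rightarrow> nat \<Rightarrow> (nat \<Rightarrow> nat set \<Rightarrow> real) \<Rightarrow> (nat \<Rightarrow> nat option) \<Rightarrow> real" where
  "welfare n m f a = (\<Sum>j<n. f j {i. i < m \<and> a i = Some j})"

definition assignments :: "nat \<Rightarrow> nat \<Rightarrow> (nat \<Rightarrow> nat option) set" where
  "assignments n m = {..<m} \<rightarrow>\<^sub>E insert None (Some ` {..<n})"

definition opt_welfare :: "nat \<Rightarrow> nat \<Rightarrow> (nat \<Rightarrow> nat set \<Rightarrow> real) \<Rightarrow> real" where
  "opt_welfare n m f = Max (welfare n m f ` assignments n m)"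

(* A deterministic online algorithm: given the number of bidders n, the index t
   of the arriving item and the value oracles, it outputs Some j (assign to bidder j)
   or None (discard).  Outputs Some j with j >= n count as discarding. *)
type_synonym online_alg = "nat \<Rightarrow> nat \<Rightarrow> (nat \<Rightarrow> nat set \<Rightarrow> real) \<Rightarrow> nat option"

(* Since the algorithm is deterministic, the adaptive adversary is captured by
   letting the instance be chosen after the algorithm. *)
definition online :: "online_alg \<Rightarrow> bool" where
  "online alg \<longleftrightarrow>
     (\<forall>n t f g. (\<forall>j<n. \<forall>S. S \<subseteq> {..t} \<longrightarrow> f j S = g j S) \<longrightarrow> alg n t f = alg n t g)"

definition alg_welfare :: "online_alg \<Rightarrow> nat \<Rightarrow> nat \<Rightarrow> (nat \<Rightarrow> nat set \<Rightarrow> real) \<Rightarrow> real" where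
  "alg_welfare alg n m f = welfare n m f (\<lambda>t. alg n t f)"

definition competitive :: "online_alg \<Rightarrow> real \<Rightarrow> bool" where
  "competitive alg \<alpha> \<longleftrightarrow>
     (\<forall>n m f. valid_instance n m f \<longrightarrow> alg_welfare alg n m f \<ge> \<alpha> * opt_welfare n m f)"

end

theory Submission
  imports Defs
begin

text \<open>A single bidder values item 0 alone at a small \<open>d > 0\<close>, item 1 alone at 1, and both
  together at nothing. If the algorithm discards item 0, the adversary stops: the algorithm
  gets 0 against \<open>d\<close>. If it keeps item 0, item 1 arrives and the bidder's bundle contains
  item 0, so the algorithm gets at most \<open>d\<close> against 1. Hence no ratio above \<open>d\<close>, and \<open>d\<close> is
  arbitrary. The algorithm is not told the number of items.\<close>

definition decoy_profile :: "real \<Rightarrow> nat \<Rightarrow> nat set \<Rightarrow> real" where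
  "decoy_profile d j S = (if 0 \<in> S \<and> 1 \<notin> S then d else if 1 \<in> S \<and> 0 \<notin> S then 1 else 0)"

lemma valid_instance_decoy_profile: "0 \<le> d \<Longrightarrow> valid_instance n m (decoy_profile d)"
  unfolding valid_instance_def submodular_on_def nonneg_on_def decoy_profile_def by auto

lemma decoy_profile_le_if_first_item: "0 \<in> S \<Longrightarrow> 0 \<le> d \<Longrightarrow> decoy_profile d j S \<le> d"
  unfolding decoy_profile_def by simp

lemma welfare_le_opt_welfare: "a \<in> assignments n m \<Longrightarrow> welfare n m f a \<le> opt_welfare n m f"
  unfolding opt_welfare_def assignments_def by (rule Max_ge) (auto intro!: finite_PiE)

lemma welfare_single_bidder: "welfare 1 m f a = f 0 {i. i < m \<and> a i = Some 0}"
  unfolding welfare_def by simp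

lemma opt_welfare_decoy_profile_one_item: "d \<le> opt_welfare 1 1 (decoy_profile d)"
proof -
  let ?a = "\<lambda>i::nat. if i < 1 then Some (0::nat) else undefined"
  have "?a \<in> assignments 1 1" unfolding assignments_def by (auto split: if_splits)
  from welfare_le_opt_welfare[OF this, of "decoy_profile d"] show ?thesis
    unfolding welfare_single_bidder by (simp add: decoy_profile_def)
qed

lemma opt_welfare_decoy_profile_two_items: "1 \<le> opt_welfare 1 2 (decoy_profile d)"
proof -
  let ?a = "\<lambda>i::nat. if i = 1 then Some (0::nat) else if i < 2 then None else undefined"
  have "?a \<in> assignments 1 2" unfolding assignments_def by (auto split: if_splits)
  from welfare_le_opt_welfare[OF this, of "decoy_profile d"] show ?thesis
    unfolding welfare_single_bidder by (simp add: decoy_profile_def)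
qed

lemma not_competitive_if_pos:
  assumes "0 < \<alpha>"
  shows "\<not> competitive alg \<alpha>"
proof
  assume competitive: "competitive alg \<alpha>"
  define d where "d = \<alpha> / 2"
  define f where "f = decoy_profile d"
  have d: "0 < d" "d < \<alpha>" using assms by (auto simp: d_def)
  have ratio: "\<alpha> * opt_welfare 1 m f \<le> alg_welfare alg 1 m f" for m
    using competitive valid_instance_decoy_profile[of d] d
    unfolding competitive_def f_def by auto
  show False
  proof (cases "alg 1 0 f = Some 0")
    case True
    then have "0 \<in> {i. i < 2 \<and> alg 1 i f = Some 0}" by simp
    then have "alg_welfare alg 1 2 f \<le> d"
      unfolding alg_welfare_def welfare_single_bidder f_def
      using decoy_profile_le_if_first_item d(1) by (metis less_imp_le)
    moreover have "\<alpha> \<le> \<alpha> * opt_welfare 1 2 f"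
      using opt_welfare_decoy_profile_two_items[of d] assms
      unfolding f_def by (simp add: mult_le_cancel_left1)
    ultimately show False using ratio[of 2] d by linarith
  next
    case False
    then have nothing_kept: "{i. i < 1 \<and> alg 1 i f = Some 0} = {}" by auto
    have "alg_welfare alg 1 1 f = 0"
      unfolding alg_welfare_def welfare_single_bidder nothing_kept
      by (simp add: f_def decoy_profile_def)
    moreover have "\<alpha> * d \<le> \<alpha> * opt_welfare 1 1 f"
      using opt_welfare_decoy_profile_one_item[of d] assms unfolding f_def by simp
    moreover have "0 < \<alpha> * d" using assms d by simp
    ultimately show False using ratio[of 1] by linarith
  qed
qed

theorem theorem2:
  fixes M :: real
  assumes "M > 0"
  shows "\<forall>alg \<alpha>. online alg \<and> \<alpha> > 1 / M \<longrightarrow> \<not> competitive alg \<alpha>"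
proof (intro allI impI)
  fix alg and \<alpha> :: real
  assume "online alg \<and> \<alpha> > 1 / M"
  moreover have "0 < 1 / M" using assms by simp
  ultimately show "\<not> competitive alg \<alpha>" by (intro not_competitive_if_pos) linarith
qed

end
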